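(* Let $m,n,s,k,c$ be positive integers such that $2\leq s\leq n$, $2\leq k\leq m$ and $ms=nk$. Suppose that $s$ and $k$ are both even and $(s,k)\neq(2,2)$. Then there exists a $\mathrm{MS}^0_{\mathbb Z_{nkc+1}^*}(m,n;s,k;c)$.
   Context: Let $(\Gamma,+)$ be an abelian group and $\Omega\subseteq\Gamma$ with $|\Omega|>1$. A partially filled array is an array in which some cells may be empty. A zero-sum magic partially filled array set $\mathrm{MS}^0_\Omega(m,n;s,k;c)$ is a set of $c$ partially filled $m\times n$ arrays with entries in $\Omega$ such that every element of $\Omega$ appears exactly once in exactly one of the arrays, every array has exactly $s$ filled cells in each row and exactly $k$ in each column, and in every array the entries of each row and of each column sum to $0_\Gamma$. $\mathbb Z_N$ is the cyclic group of order $N$ and $\mathbb Z_N^*=\mathbb Z_N\setminus\{0\}$. *)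

theory Defs
  imports Main
begin

text \<open>Elements of the cyclic group Z_N are represented by their canonical
residues 0..N-1 (as integers); Z_N^* = Z_N minus 0 is then the set {1..N-1}.
A set of c partially filled m x n arrays is a function A, where A t i j is the
content of cell (i,j) of array t (t < c, i < m, j < n); None means empty.\<close>

definition ZN_star :: "nat \<Rightarrow> int set" where
  "ZN_star N = {1 .. int N - 1}"

definition row_cells :: "(nat \<Rightarrow> nat \<Rightarrow> nat \<Rightarrow> int option) \<Rightarrow> nat \<Rightarrow> nat \<Rightarrow> nat \<Rightarrow> nat set" where
  "row_cells A n t i = {j. j < n \<and> A t i j \<noteq> None}"

definition col_cells :: "(nat \<Rightarrow> nat \<Rightarrow> nat \<Rightarrow> int option) \<Rightarrow> nat \<Rightarrow> nat \<Rightarrow> nat \<Rightarrow> nat set" where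
  "col_cells A m t j = {i. i < m \<and> A t i j \<noteq> None}"

definition is_MS0_ZN_star ::
  "nat \<Rightarrow> nat \<Rightarrow> nat \<Rightarrow> nat \<Rightarrow> nat \<Rightarrow> nat \<Rightarrow> (nat \<Rightarrow> nat \<Rightarrow> nat \<Rightarrow> int option) \<Rightarrow> bool" where
  "is_MS0_ZN_star N m n s k c A \<longleftrightarrow>
     (\<forall>t i j. (c \<le> t \<or> m \<le> i \<or> n \<le> j) \<longrightarrow> A t i j = None) \<and>
     (\<forall>t i j x. A t i j = Some x \<longrightarrow> x \<in> ZN_star N) \<and>
     (\<forall>x \<in> ZN_star N. \<exists>!(t, i, j). A t i j = Some x) \<and>
     (\<forall>t < c. \<forall>i < m. card (row_cells A n t i) = s) \<and>
     (\<forall>t < c. \<forall>j < n. card (col_cells A m t j) = k) \<and>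
     (\<forall>t < c. \<forall>i < m. (\<Sum>j \<in> row_cells A n t i. the (A t i j)) mod int N = 0) \<and>
     (\<forall>t < c. \<forall>j < n. (\<Sum>i \<in> col_cells A m t j. the (A t i j)) mod int N = 0)"

end

theory Submission
  imports Defs
begin

text \<open>
  Write \<open>s = 2h\<close> and \<open>k = 2\<kappa>\<close>; after transposing if necessary, \<open>h \<ge> 2\<close>.
  With \<open>N = nkc + 1 = 2cmh + 1\<close>, the set \<open>\<int>\<^sub>N\<^sup>*\<close> splits into the \<open>cmh\<close> pairs
  \<open>{d, N - d}\<close>. Choose one representative \<open>d\<close> of every pair and arrange these into \<open>cm\<close>
  groups of \<open>h\<close> numbers, all groups having the same sum. Every group serves one row of one
  array: its \<open>h\<close> numbers \<open>d\<close> are placed in that row, and the \<open>h\<close> numbers \<open>N - d\<close> in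
  the next row (cyclically), each in the column of its partner. A row then contains one group and
  the negatives of another, so it sums to \<open>hN\<close>; a column consists of \<open>\<kappa>\<close> full pairs and
  sums to \<open>\<kappa>N\<close>. Columns are blocks of \<open>\<kappa>\<close> consecutive positions in the ordering that
  lists the even positions before the odd ones, which keeps the \<open>2\<kappa>\<close> cells of every
  column in distinct rows.
\<close>

section \<open>Arrays filled from a placement\<close>

definition placement_array ::
  "('x \<Rightarrow> nat \<times> nat \<times> nat) \<Rightarrow> ('x \<Rightarrow> int) \<Rightarrow> 'x set \<Rightarrow> nat \<Rightarrow> nat \<Rightarrow> nat \<Rightarrow> int option" where
  "placement_array cell val X t i j =
     (if (t, i, j) \<in> cell ` X then Some (val (the_inv_into X cell (t, i, j))) else None)"

abbreviation placed_in_row :: "('x \<Rightarrow> nat \<times> nat \<times> nat) \<Rightarrow> 'x set \<Rightarrow> nat \<Rightarrow> nat \<Rightarrow> 'x set" where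
  "placed_in_row cell X t i \<equiv> {x\<in>X. fst (cell x) = t \<and> fst (snd (cell x)) = i}"

abbreviation placed_in_col :: "('x \<Rightarrow> nat \<times> nat \<times> nat) \<Rightarrow> 'x set \<Rightarrow> nat \<Rightarrow> nat \<Rightarrow> 'x set" where
  "placed_in_col cell X t j \<equiv> {x\<in>X. fst (cell x) = t \<and> snd (snd (cell x)) = j}"

lemma placement_array_eq_Some_iff:
  assumes "inj_on cell X"
  shows "placement_array cell val X t i j = Some v \<longleftrightarrow> (\<exists>x\<in>X. cell x = (t, i, j) \<and> v = val x)"
  using assms by (force simp: placement_array_def the_inv_into_f_f dest: inj_onD)

lemma placement_array_cell:
  assumes "inj_on cell X" "x \<in> X" "cell x = (t, i, j)"
  shows "placement_array cell val X t i j = Some (val x)"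
  using assms placement_array_eq_Some_iff by blast

lemma bij_betw_row_cells_placement_array:
  assumes inj: "inj_on cell X" and bounded: "\<And>x. x \<in> X \<Longrightarrow> snd (snd (cell x)) < n"
  shows "bij_betw (\<lambda>x. snd (snd (cell x))) (placed_in_row cell X t i)
           (row_cells (placement_array cell val X) n t i)"
proof (rule bij_betw_imageI)
  show "inj_on (\<lambda>x. snd (snd (cell x))) (placed_in_row cell X t i)"
    using inj by (auto simp: inj_on_def prod_eq_iff)
  show "(\<lambda>x. snd (snd (cell x))) ` placed_in_row cell X t i
          = row_cells (placement_array cell val X) n t i"
    using bounded unfolding row_cells_def
    by (force simp: placement_array_eq_Some_iff[OF inj] prod_eq_iff)
qed

lemma bij_betw_col_cells_placement_array:
  assumes inj: "inj_on cell X" and bounded: "\<And>x. x \<in> X \<Longrightarrow> fst (snd (cell x)) < m"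
  shows "bij_betw (\<lambda>x. fst (snd (cell x))) (placed_in_col cell X t j)
           (col_cells (placement_array cell val X) m t j)"
proof (rule bij_betw_imageI)
  show "inj_on (\<lambda>x. fst (snd (cell x))) (placed_in_col cell X t j)"
    using inj by (auto simp: inj_on_def prod_eq_iff)
  show "(\<lambda>x. fst (snd (cell x))) ` placed_in_col cell X t j
          = col_cells (placement_array cell val X) m t j"
    using bounded unfolding col_cells_def
    by (force simp: placement_array_eq_Some_iff[OF inj] prod_eq_iff)
qed

lemma sum_row_cells_placement_array:
  assumes inj: "inj_on cell X" and bounded: "\<And>x. x \<in> X \<Longrightarrow> snd (snd (cell x)) < n"
  shows "(\<Sum>j\<in>row_cells (placement_array cell val X) n t i. the (placement_array cell val X t i j))
    = (\<Sum>x\<in>placed_in_row cell X t i. val x)"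
proof -
  have entry: "the (placement_array cell val X t i (snd (snd (cell x)))) = val x"
    if "x \<in> placed_in_row cell X t i" for x
  proof -
    have "cell x = (t, i, snd (snd (cell x)))"
      using that by (simp add: prod_eq_iff)
    with that have "placement_array cell val X t i (snd (snd (cell x))) = Some (val x)"
      by (intro placement_array_cell[OF inj]) auto
    then show ?thesis
      by simp
  qed
  have "(\<Sum>j\<in>row_cells (placement_array cell val X) n t i. the (placement_array cell val X t i j))
      = (\<Sum>x\<in>placed_in_row cell X t i. the (placement_array cell val X t i (snd (snd (cell x)))))"
    using inj bounded by (intro sum.reindex_bij_betw[symmetric] bij_betw_row_cells_placement_array)
  also have "\<dots> = (\<Sum>x\<in>placed_in_row cell X t i. val x)"
    using entry by (rule sum.cong[OF refl])
  finally show ?thesis .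
qed

lemma sum_col_cells_placement_array:
  assumes inj: "inj_on cell X" and bounded: "\<And>x. x \<in> X \<Longrightarrow> fst (snd (cell x)) < m"
  shows "(\<Sum>i\<in>col_cells (placement_array cell val X) m t j. the (placement_array cell val X t i j))
    = (\<Sum>x\<in>placed_in_col cell X t j. val x)"
proof -
  have entry: "the (placement_array cell val X t (fst (snd (cell x))) j) = val x"
    if "x \<in> placed_in_col cell X t j" for x
  proof -
    have "cell x = (t, fst (snd (cell x)), j)"
      using that by (simp add: prod_eq_iff)
    with that have "placement_array cell val X t (fst (snd (cell x))) j = Some (val x)"
      by (intro placement_array_cell[OF inj]) auto
    then show ?thesis
      by simp
  qed
  have "(\<Sum>i\<in>col_cells (placement_array cell val X) m t j. the (placement_array cell val X t i j))
      = (\<Sum>x\<in>placed_in_col cell X t j. the (placement_array cell val X t (fst (snd (cell x))) j))"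
    using inj bounded by (intro sum.reindex_bij_betw[symmetric] bij_betw_col_cells_placement_array)
  also have "\<dots> = (\<Sum>x\<in>placed_in_col cell X t j. val x)"
    using entry by (rule sum.cong[OF refl])
  finally show ?thesis .
qed

lemma ex1_placement_array:
  assumes inj: "inj_on cell X" and val: "bij_betw val X S" and v: "v \<in> S"
  shows "\<exists>!(t, i, j). placement_array cell val X t i j = Some v"
proof -
  have "v \<in> val ` X"
    using val v by (simp add: bij_betw_def)
  then obtain x where x: "x \<in> X" "val x = v"
    by blast
  have "placement_array cell val X t i j = Some v \<longleftrightarrow> (t, i, j) = cell x" for t i j
    using x val unfolding placement_array_eq_Some_iff[OF inj] bij_betw_def inj_on_def by metis
  then have "(\<lambda>(t, i, j). placement_array cell val X t i j = Some v) = (\<lambda>p. p = cell x)"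
    by (auto simp: fun_eq_iff)
  then show ?thesis
    by simp
qed

lemma is_MS0_ZN_star_placement_array:
  assumes inj: "inj_on cell X" and val: "bij_betw val X (ZN_star N)"
    and range: "\<And>x. x \<in> X \<Longrightarrow> fst (cell x) < c \<and> fst (snd (cell x)) < m \<and> snd (snd (cell x)) < n"
    and row_card: "\<And>t i. t < c \<Longrightarrow> i < m \<Longrightarrow> card (placed_in_row cell X t i) = s"
    and col_card: "\<And>t j. t < c \<Longrightarrow> j < n \<Longrightarrow> card (placed_in_col cell X t j) = k"
    and row_sum: "\<And>t i. t < c \<Longrightarrow> i < m \<Longrightarrow> (\<Sum>x\<in>placed_in_row cell X t i. val x) mod int N = 0"
    and col_sum: "\<And>t j. t < c \<Longrightarrow> j < n \<Longrightarrow> (\<Sum>x\<in>placed_in_col cell X t j. val x) mod int N = 0"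
  shows "is_MS0_ZN_star N m n s k c (placement_array cell val X)"
proof -
  let ?A = "placement_array cell val X"
  have row_range: "\<And>x. x \<in> X \<Longrightarrow> snd (snd (cell x)) < n"
    and col_range: "\<And>x. x \<in> X \<Longrightarrow> fst (snd (cell x)) < m"
    using range by blast+
  have row_bij: "bij_betw (\<lambda>x. snd (snd (cell x))) (placed_in_row cell X t i) (row_cells ?A n t i)"
    for t i
    using inj row_range by (rule bij_betw_row_cells_placement_array)
  have col_bij: "bij_betw (\<lambda>x. fst (snd (cell x))) (placed_in_col cell X t j) (col_cells ?A m t j)"
    for t j
    using inj col_range by (rule bij_betw_col_cells_placement_array)
  have outside: "?A t i j = None" if "c \<le> t \<or> m \<le> i \<or> n \<le> j" for t i j
    using that range by (cases "?A t i j") (fastforce simp: placement_array_eq_Some_iff[OF inj])+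
  have entries: "?A t i j = Some v \<Longrightarrow> v \<in> ZN_star N" for t i j v
    using val by (auto simp: placement_array_eq_Some_iff[OF inj] bij_betw_def)
  show ?thesis
    unfolding is_MS0_ZN_star_def
  proof (intro conjI allI impI ballI)
    show "card (row_cells ?A n t i) = s" if "t < c" "i < m" for t i
      using bij_betw_same_card[OF row_bij[of t i]] row_card[OF that] by linarith
    show "card (col_cells ?A m t j) = k" if "t < c" "j < n" for t j
      using bij_betw_same_card[OF col_bij[of t j]] col_card[OF that] by linarith
    show "(\<Sum>j\<in>row_cells ?A n t i. the (?A t i j)) mod int N = 0" if "t < c" "i < m" for t i
    proof -
      have "(\<Sum>j\<in>row_cells ?A n t i. the (?A t i j)) = (\<Sum>x\<in>placed_in_row cell X t i. val x)"
        using inj row_range by (rule sum_row_cells_placement_array)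
      with row_sum[OF that] show ?thesis
        by argo
    qed
    show "(\<Sum>i\<in>col_cells ?A m t j. the (?A t i j)) mod int N = 0" if "t < c" "j < n" for t j
    proof -
      have "(\<Sum>i\<in>col_cells ?A m t j. the (?A t i j)) = (\<Sum>x\<in>placed_in_col cell X t j. val x)"
        using inj col_range by (rule sum_col_cells_placement_array)
      with col_sum[OF that] show ?thesis
        by argo
    qed
  qed (use outside entries ex1_placement_array[OF inj val] in blast)+
qed

lemma ex1_transpose:
  assumes "\<exists>!(t, i, j). P t j i"
  shows "\<exists>!(t, i, j). P t i j"
proof -
  obtain t i j where "P t j i" and uniq: "\<And>t' i' j'. P t' j' i' \<Longrightarrow> (t', i', j') = (t, i, j)"
    using assms by (auto simp: Ex1_def)
  show ?thesis
  proof (rule ex1I[of _ "(t, j, i)"])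
    show "case (t, j, i) of (t, i, j) \<Rightarrow> P t i j"
      using \<open>P t j i\<close> by simp
    fix p
    assume "case p of (t, i, j) \<Rightarrow> P t i j"
    then show "p = (t, j, i)"
      using uniq by (cases p) fastforce
  qed
qed

lemma is_MS0_ZN_star_transpose:
  assumes "is_MS0_ZN_star N n m k s c B"
  shows "is_MS0_ZN_star N m n s k c (\<lambda>t i j. B t j i)"
proof -
  have cells: "row_cells (\<lambda>t i j. B t j i) n t i = col_cells B n t i"
    "col_cells (\<lambda>t i j. B t j i) m t j = row_cells B m t j" for t i j
    by (simp_all add: row_cells_def col_cells_def)
  have unique: "\<exists>!(t, i, j). B t j i = Some x" if "\<exists>!(t, i, j). B t i j = Some x" for x
    using ex1_transpose[of "\<lambda>t i j. B t j i = Some x"] that by simp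
  from assms have
    outside: "\<forall>t i j. (c \<le> t \<or> n \<le> i \<or> m \<le> j) \<longrightarrow> B t i j = None" and
    entries: "\<forall>t i j x. B t i j = Some x \<longrightarrow> x \<in> ZN_star N" and
    unique_B: "\<forall>x \<in> ZN_star N. \<exists>!(t, i, j). B t i j = Some x" and
    lines: "\<forall>t < c. \<forall>i < n. card (row_cells B m t i) = k"
      "\<forall>t < c. \<forall>j < m. card (col_cells B n t j) = s"
      "\<forall>t < c. \<forall>i < n. (\<Sum>j \<in> row_cells B m t i. the (B t i j)) mod int N = 0"
      "\<forall>t < c. \<forall>j < m. (\<Sum>i \<in> col_cells B n t j. the (B t i j)) mod int N = 0"
    unfolding is_MS0_ZN_star_def by simp_all
  show ?thesis
    unfolding is_MS0_ZN_star_def cells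
  proof (intro conjI)
    show "\<forall>t i j. (c \<le> t \<or> m \<le> i \<or> n \<le> j) \<longrightarrow> B t j i = None"
      using outside by blast
    show "\<forall>t i j x. B t j i = Some x \<longrightarrow> x \<in> ZN_star N"
      using entries by blast
    show "\<forall>x \<in> ZN_star N. \<exists>!(t, i, j). B t j i = Some x"
      using unique_B unique by blast
  qed (use lines in simp_all)
qed

section \<open>A half set of \<open>\<int>\<^sub>N\<^sup>*\<close> with constant row sums\<close>

lemma sum_lessThan_pairs: "(\<Sum>q<2 * p. f q) = (\<Sum>w<p. f (2 * w) + f (2 * w + 1 :: nat))"
  by (induction p) (simp_all add: ac_simps)

lemma slot_offset_eqD:
  fixes a b r r' G :: nat
  assumes "1 \<le> r" "r \<le> G" "1 \<le> r'" "r' \<le> G" and eq: "a * G + r = b * G + r'"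
  shows "a = b \<and> r = r'"
proof -
  have "a < b + 1"
  proof (rule ccontr)
    assume "\<not> a < b + 1"
    then have "(b + 1) * G \<le> a * G" by (intro mult_le_mono1) simp
    then show False using assms by simp
  qed
  moreover have "b < a + 1"
  proof (rule ccontr)
    assume "\<not> b < a + 1"
    then have "(a + 1) * G \<le> b * G" by (intro mult_le_mono1) simp
    then show False using assms by simp
  qed
  ultimately have "a = b" by simp
  then show ?thesis using eq by simp
qed

text \<open>
  Row \<open>g < G\<close> of a \<open>G \<times> h\<close> table whose entries, together with their negatives modulo
  \<open>N = 2Gh + 1\<close>, exhaust \<open>\<int>\<^sub>N\<^sup>*\<close>. Apart from the middle entry of an odd row, entry \<open>q\<close> lies in
  the interval \<open>[slot\<cdot>G + 1, slot\<cdot>G + G]\<close>, and consecutive entries \<open>g + 1\<close>, \<open>G - g\<close> pair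
  up to sums independent of \<open>g\<close>. An odd row starts with the triple \<open>g + 1\<close>, \<open>G + 1 + g\<close>,
  \<open>Gh + G - 1 - 2g\<close>; the last of these runs through every other number of
  \<open>[Gh - G + 1, Gh + G]\<close>, an interval closed under \<open>x \<mapsto> N - x\<close>.
\<close>

definition entry_slot :: "nat \<Rightarrow> nat \<Rightarrow> nat" where
  "entry_slot h q = (if odd h \<and> 3 \<le> q then q - 1 else q)"

definition entry_offset :: "nat \<Rightarrow> nat \<Rightarrow> nat \<Rightarrow> nat \<Rightarrow> nat" where
  "entry_offset G h g q = (if even (entry_slot h q) \<or> odd h \<and> q = 1 then g + 1 else G - g)"

definition row_entry :: "nat \<Rightarrow> nat \<Rightarrow> nat \<Rightarrow> nat \<Rightarrow> nat" where
  "row_entry G h g q =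
     (if odd h \<and> q = 2 then G * h + G - 1 - 2 * g else entry_slot h q * G + entry_offset G h g q)"

lemma entry_offset_bounds: "g < G \<Longrightarrow> 1 \<le> entry_offset G h g q \<and> entry_offset G h g q \<le> G"
  by (auto simp: entry_offset_def)

lemma entry_offset_inj:
  "g < G \<Longrightarrow> g' < G \<Longrightarrow> entry_offset G h g q = entry_offset G h g' q \<Longrightarrow> g = g'"
  by (auto simp: entry_offset_def split: if_splits)

lemma entry_slot_inj:
  "\<not> (odd h \<and> q = 2) \<Longrightarrow> \<not> (odd h \<and> q' = 2) \<Longrightarrow> entry_slot h q = entry_slot h q' \<Longrightarrow> q = q'"
  by (auto simp: entry_slot_def split: if_splits)

lemma row_entry_regular:
  "\<not> (odd h \<and> q = 2) \<Longrightarrow> row_entry G h g q = entry_slot h q * G + entry_offset G h g q"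
  by (auto simp: row_entry_def)

lemma row_entry_middle:
  assumes "odd h" "2 \<le> h" "g < G"
  shows "row_entry G h g 2 + 2 * g + 1 = G * h + G"
proof -
  have "2 * G \<le> G * h"
    using assms(2) by simp
  moreover have "row_entry G h g 2 = G * h + G - 1 - 2 * g"
    using assms(1) by (simp add: row_entry_def)
  ultimately show ?thesis
    using assms(3) by linarith
qed

lemma row_entry_regular_le:
  assumes "g < G" "q < h" "2 \<le> h" "\<not> (odd h \<and> q = 2)"
  shows "row_entry G h g q \<le> (if odd h then h - 1 else h) * G"
proof -
  have "odd h \<Longrightarrow> 3 \<le> h"
    using assms(3) by presburger
  then have "entry_slot h q + 1 \<le> (if odd h then h - 1 else h)"
    using assms(2,4) unfolding entry_slot_def by simp linarith
  then have "(entry_slot h q + 1) * G \<le> (if odd h then h - 1 else h) * G"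
    by (rule mult_le_mono1)
  then show ?thesis
    using row_entry_regular[OF assms(4)] entry_offset_bounds[OF assms(1), of h q] by simp
qed

lemma row_entry_regular_le_mult:
  assumes "g < G" "q < h" "2 \<le> h" "\<not> (odd h \<and> q = 2)"
  shows "row_entry G h g q \<le> G * h"
proof -
  have "(if odd h then h - 1 else h) * G \<le> h * G"
    by (intro mult_le_mono1) auto
  moreover have "h * G = G * h"
    by simp
  ultimately show ?thesis
    using row_entry_regular_le[OF assms] by linarith
qed

lemma row_entry_regular_add_le:
  assumes "odd h" "2 \<le> h" "g < G" "q < h" "q \<noteq> 2"
  shows "row_entry G h g q + G \<le> G * h"
proof -
  have "(h - 1) * G + G = G * h"
    using assms(2) by (simp add: algebra_simps flip: mult_Suc)
  moreover have "row_entry G h g q \<le> (h - 1) * G"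
    using row_entry_regular_le[OF assms(3,4,2)] assms(1,5) by simp
  ultimately show ?thesis
    by linarith
qed

lemma row_entry_bounds:
  assumes "g < G" "q < h" "2 \<le> h"
  shows "1 \<le> row_entry G h g q \<and> row_entry G h g q \<le> 2 * (G * h)"
proof (cases "odd h \<and> q = 2")
  case True
  then have "row_entry G h g q + 2 * g + 1 = G * h + G"
    using row_entry_middle[OF _ assms(3,1)] by auto
  moreover have "2 * G \<le> G * h"
    using assms(3) by simp
  ultimately show ?thesis
    using assms(1) by linarith
next
  case False
  then show ?thesis
    using row_entry_regular[OF False, of G g] row_entry_regular_le_mult[OF assms False]
      entry_offset_bounds[OF assms(1), of h q]
    by linarith
qed

lemma row_entry_inj:
  assumes g: "g < G" "g' < G" and q: "q < h" "q' < h" and h: "2 \<le> h"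
    and eq: "row_entry G h g q = row_entry G h g' q'"
  shows "g = g' \<and> q = q'"
proof -
  consider "odd h" "q = 2" "q' = 2" | "odd h" "q = 2" "q' \<noteq> 2" | "odd h" "q \<noteq> 2" "q' = 2"
    | "\<not> (odd h \<and> q = 2)" "\<not> (odd h \<and> q' = 2)"
    by blast
  then show ?thesis
  proof cases
    case 1
    then show ?thesis
      using eq row_entry_middle[OF 1(1) h g(1)] row_entry_middle[OF 1(1) h g(2)] by simp
  next
    case 2
    then show ?thesis
      using eq row_entry_middle[OF 2(1) h g(1)] row_entry_regular_add_le[OF 2(1) h g(2) q(2) 2(3)] g
      by simp
  next
    case 3
    then show ?thesis
      using eq row_entry_middle[OF 3(1) h g(2)] row_entry_regular_add_le[OF 3(1) h g(1) q(1) 3(2)] g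
      by simp
  next
    case 4
    have "entry_slot h q = entry_slot h q' \<and> entry_offset G h g q = entry_offset G h g' q'"
      using eq entry_offset_bounds[OF g(1), of h q] entry_offset_bounds[OF g(2), of h q']
      by (intro slot_offset_eqD) (simp_all add: row_entry_regular[OF 4(1)] row_entry_regular[OF 4(2)])
    then show ?thesis
      using 4 entry_slot_inj entry_offset_inj[OF g] by blast
  qed
qed

lemma row_entry_add_ne:
  assumes g: "g < G" "g' < G" and q: "q < h" "q' < h" and h: "2 \<le> h"
  shows "row_entry G h g q + row_entry G h g' q' \<noteq> 2 * (G * h) + 1"
proof -
  consider "odd h" "q = 2" "q' = 2" | "odd h" "q = 2" "q' \<noteq> 2" | "odd h" "q \<noteq> 2" "q' = 2"
    | "\<not> (odd h \<and> q = 2)" "\<not> (odd h \<and> q' = 2)"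
    by blast
  then show ?thesis
  proof cases
    case 1
    then have "row_entry G h g q + row_entry G h g' q' + 2 * (g + g' + 1) = 2 * (G * h + G)"
      using row_entry_middle[OF 1(1) h g(1)] row_entry_middle[OF 1(1) h g(2)] by simp
    then show ?thesis
      by presburger
  next
    case 2
    then show ?thesis
      using row_entry_middle[OF 2(1) h g(1)] row_entry_regular_add_le[OF 2(1) h g(2) q(2) 2(3)] by simp
  next
    case 3
    then show ?thesis
      using row_entry_middle[OF 3(1) h g(2)] row_entry_regular_add_le[OF 3(1) h g(1) q(1) 3(2)] by simp
  next
    case 4
    then show ?thesis
      using row_entry_regular_le_mult[OF g(1) q(1) h] row_entry_regular_le_mult[OF g(2) q(2) h] by linarith
  qed
qed

lemma row_entry_sum_eq:
  assumes g: "g < G" "g' < G" and h: "2 \<le> h"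
  shows "(\<Sum>q<h. row_entry G h g q) = (\<Sum>q<h. row_entry G h g' q)"
proof (cases "even h")
  case True
  then obtain p where p: "h = 2 * p"
    by blast
  have pair: "row_entry G h x (2 * w) + row_entry G h x (Suc (2 * w)) = (4 * w + 2) * G + 1"
    if "x < G" for x w
    using True that by (simp add: row_entry_def entry_slot_def entry_offset_def algebra_simps)
  show ?thesis
    unfolding p sum_lessThan_pairs by (simp only: flip: p) (simp add: pair g)
next
  case False
  have "h = Suc (Suc (Suc (2 * ((h - 3) div 2))))"
    using False h by presburger
  then obtain p where p: "h = Suc (Suc (Suc (2 * p)))"
    by blast
  have first: "row_entry G h x 0 + row_entry G h x 1 + row_entry G h x 2 = G * h + 2 * G + 1"
    if "x < G" for x
    using False row_entry_middle[OF False h that]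
    by (simp add: row_entry_def entry_slot_def entry_offset_def)
  have pair: "row_entry G h x (2 * w + 3) + row_entry G h x (2 * w + 4) = (4 * w + 6) * G + 1"
    if "x < G" for x w
    using False that by (simp add: row_entry_def entry_slot_def entry_offset_def algebra_simps)
  have split: "(\<Sum>q<h. f q) = f 0 + f 1 + f 2 + (\<Sum>w<p. f (2 * w + 3) + f (2 * w + 4))"
    for f :: "nat \<Rightarrow> nat"
    unfolding p sum.lessThan_Suc_shift sum_lessThan_pairs by (simp add: eval_nat_numeral ac_simps)
  show ?thesis
    unfolding split using first[OF g(1)] first[OF g(2)] by (simp add: pair g)
qed

section \<open>The evens-first column layout\<close>

definition evens_first :: "nat \<Rightarrow> nat \<Rightarrow> nat" where
  "evens_first W e = (if even e then e div 2 else (W + 1) div 2 + e div 2)"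

lemma evens_first_less: "e < W \<Longrightarrow> evens_first W e < W"
  unfolding evens_first_def by presburger

lemma inj_on_evens_first: "inj_on (evens_first W) {..<W}"
  unfolding evens_first_def inj_on_def by auto presburger

lemma bij_betw_evens_first: "bij_betw (evens_first W) {..<W} {..<W}"
proof -
  have "evens_first W ` {..<W} = {..<W}"
    using inj_on_evens_first evens_first_less
    by (intro card_subset_eq) (auto simp: card_image)
  then show ?thesis
    using inj_on_evens_first by (simp add: bij_betw_def)
qed

abbreviation odd_shift :: "nat \<Rightarrow> nat \<Rightarrow> nat" where
  "odd_shift W e \<equiv> e + (if odd e then W else 0)"

lemma double_evens_first:
  "2 * evens_first W e + (if odd e \<and> even W then 1 else 0) = odd_shift W e"
  unfolding evens_first_def by auto

lemma evens_first_less_half_iff: "e < W \<Longrightarrow> evens_first W e < (W + 1) div 2 \<longleftrightarrow> even e"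
  unfolding evens_first_def by auto

lemma mod_eq_in_window:
  fixes u u' L m :: nat
  assumes "u mod m = u' mod m" "L \<le> u" "L \<le> u'" "u \<le> L + m" "u' \<le> L + m"
  shows "u = u' \<or> u = L \<and> u' = L + m \<or> u = L + m \<and> u' = L"
proof -
  have "int m dvd int u - int u'"
    using assms(1) by (metis mod_eq_dvd_iff of_nat_mod)
  then obtain z where z: "int u - int u' = int m * z"
    by blast
  have "\<bar>int m * z\<bar> \<le> int m"
    using z assms(2-5) by linarith
  show ?thesis
  proof (cases "m = 0")
    case True
    then show ?thesis
      using assms(1) by simp
  next
    case False
    then have "\<bar>z\<bar> \<le> 1"
      using \<open>\<bar>int m * z\<bar> \<le> int m\<close> by (simp add: abs_mult)
    then have "z = -1 \<or> z = 0 \<or> z = 1"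
      by auto
    then show ?thesis
      using z assms(2-5) by auto
  qed
qed

lemma odd_shift_add_mod:
  fixes e a m W :: nat
  assumes "m dvd W"
  shows "(odd_shift W e + a) mod m = (e + a) mod m"
proof -
  obtain c where "W = m * c"
    using assms by blast
  then have "(e + a + (if odd e then W else 0)) mod m = (e + a) mod m"
    by simp
  then show ?thesis
    by (simp add: ac_simps)
qed

lemma odd_shift_inj:
  fixes e e' a b W :: nat
  assumes "e < W" "e' < W" "a \<le> 1" "b \<le> 1"
    and "odd_shift W e + a = odd_shift W e' + b"
  shows "e = e' \<and> a = b"
proof -
  have parity: "odd e \<longleftrightarrow> odd e'"
    using assms by (auto split: if_splits dest: odd_pos)
  then have "e + a = e' + b"
    using assms(5) by (auto split: if_splits)
  with parity assms(3,4) show ?thesis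
    by presburger
qed

lemma odd_shift_in_block:
  fixes e a W \<kappa> :: nat
  assumes "0 < \<kappa>" "a \<le> 1"
  defines "j \<equiv> evens_first W e div \<kappa>"
  shows "2 * j * \<kappa> \<le> odd_shift W e + a"
    and "odd_shift W e + a \<le> 2 * j * \<kappa> + 2 * \<kappa>"
proof -
  have "j * \<kappa> \<le> evens_first W e" "evens_first W e < j * \<kappa> + \<kappa>"
    using div_times_less_eq_dividend[of "evens_first W e" \<kappa>]
      dividend_less_div_times[OF assms(1), of "evens_first W e"]
    unfolding j_def by simp_all
  then show "2 * j * \<kappa> \<le> odd_shift W e + a"
    and "odd_shift W e + a \<le> 2 * j * \<kappa> + 2 * \<kappa>"
    using double_evens_first[of W e] assms(2) by (auto split: if_splits)
qed

lemma odd_shift_block_ends: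
  fixes e e' a b j m W \<kappa> :: nat
  assumes "m dvd W" "0 < \<kappa>" "2 * \<kappa> \<le> m" "e < W" "e' < W" "a \<le> 1" "b \<le> 1"
    and col: "evens_first W e div \<kappa> = j" "evens_first W e' div \<kappa> = j"
    and top: "odd_shift W e + a = 2 * j * \<kappa> + m"
    and bottom: "odd_shift W e' + b = 2 * j * \<kappa>"
  shows False
proof -
  define p p' where "p = evens_first W e" and "p' = evens_first W e'"
  have p: "j * \<kappa> \<le> p" "p < j * \<kappa> + \<kappa>" and p': "j * \<kappa> \<le> p'"
    using div_times_less_eq_dividend[of p \<kappa>] dividend_less_div_times[OF assms(2), of p]
      div_times_less_eq_dividend[of p' \<kappa>] col
    unfolding p_def p'_def by simp_all
  have m: "m = 2 * \<kappa>"
    using odd_shift_in_block(2)[OF assms(2,6), where W = W and e = e] col(1) top assms(3) by simp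
  have "2 * p + (if odd e \<and> even W then 1 else 0) + a = 2 * j * \<kappa> + 2 * \<kappa>"
    using double_evens_first[of W e] top m unfolding p_def by simp
  then have e_top: "odd e" "even W" "p + 1 = j * \<kappa> + \<kappa>"
    using p assms(6) by (auto split: if_splits)
  have "2 * p' + (if odd e' \<and> even W then 1 else 0) + b = 2 * j * \<kappa>"
    using double_evens_first[of W e'] bottom unfolding p'_def by simp
  then have e'_bottom: "even e'" "p' = j * \<kappa>"
    using p' e_top(2) by (auto split: if_splits)
  obtain c where c: "W = 2 * \<kappa> * c"
    using assms(1) m by blast
  have "(W + 1) div 2 \<le> p" "p' < (W + 1) div 2"
    using evens_first_less_half_iff[OF assms(4)] evens_first_less_half_iff[OF assms(5)] e_top(1)
      e'_bottom(1) unfolding p_def p'_def by simp_all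
  moreover have "(W + 1) div 2 = c * \<kappa>"
    using c by simp
  ultimately have "c * \<kappa> < j * \<kappa> + \<kappa>" "j * \<kappa> < c * \<kappa>"
    using e_top(3) e'_bottom(2) by linarith+
  then have "c * \<kappa> < Suc j * \<kappa>" "j < c"
    by simp_all
  then show False
    using mult_less_cancel2[of c \<kappa> "Suc j"] by simp
qed

text \<open>
  Position \<open>e\<close> occupies rows \<open>e\<close> and \<open>e + 1\<close> (mod \<open>m\<close>) of column \<open>evens_first W e div \<kappa>\<close>.
  Since \<open>m\<close> divides \<open>W\<close>, these rows are also \<open>odd_shift W e + a\<close> (mod \<open>m\<close>), and within a column
  these numbers stay in a window of length \<open>2\<kappa> \<le> m\<close>. Only the two ends of the window could
  collide, and they lie on different sides of the boundary between even and odd positions.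
\<close>

lemma evens_first_layout_inj:
  fixes e e' a b m W \<kappa> :: nat
  assumes W: "m dvd W" and \<kappa>: "0 < \<kappa>" "2 * \<kappa> \<le> m" and e: "e < W" "e' < W"
    and ab: "a \<le> 1" "b \<le> 1"
    and col: "evens_first W e div \<kappa> = evens_first W e' div \<kappa>"
    and row: "(e + a) mod m = (e' + b) mod m"
  shows "e = e' \<and> a = b"
proof -
  define j where "j = evens_first W e div \<kappa>"
  define u u' where "u = odd_shift W e + a" and "u' = odd_shift W e' + b"
  have congruent: "u mod m = u' mod m"
    using row odd_shift_add_mod[OF W, of e a] odd_shift_add_mod[OF W, of e' b] by (simp add: u_def u'_def)
  have window: "2 * j * \<kappa> \<le> u" "u \<le> 2 * j * \<kappa> + 2 * \<kappa>"
    "2 * j * \<kappa> \<le> u'" "u' \<le> 2 * j * \<kappa> + 2 * \<kappa>"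
    using odd_shift_in_block[OF \<kappa>(1) ab(1), where W = W and e = e]
      odd_shift_in_block[OF \<kappa>(1) ab(2), where W = W and e = e'] col
    unfolding u_def u'_def j_def by simp_all
  then have "u \<le> 2 * j * \<kappa> + m" "u' \<le> 2 * j * \<kappa> + m"
    using \<kappa>(2) by linarith+
  then consider "u = u'" | "u = 2 * j * \<kappa>" "u' = 2 * j * \<kappa> + m"
    | "u = 2 * j * \<kappa> + m" "u' = 2 * j * \<kappa>"
    using mod_eq_in_window[OF congruent window(1,3)] by blast
  moreover have blocks: "evens_first W e div \<kappa> = j" "evens_first W e' div \<kappa> = j"
    using col unfolding j_def by simp_all
  ultimately show ?thesis
  proof cases
    case 1
    then show ?thesis
      unfolding u_def u'_def by (rule odd_shift_inj[OF e ab])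
  next
    case 2
    from 2(2,1) have False
      unfolding u_def u'_def by (rule odd_shift_block_ends[OF W \<kappa> e(2,1) ab(2,1) blocks(2,1)])
    then show ?thesis ..
  next
    case 3
    from 3 have False
      unfolding u_def u'_def by (rule odd_shift_block_ends[OF W \<kappa> e ab blocks])
    then show ?thesis ..
  qed
qed

lemma residue_class_eq_image:
  fixes m h i :: nat
  assumes "i < m"
  shows "{e. e < m * h \<and> e mod m = i} = (\<lambda>q. i + m * q) ` {..<h}"
proof (intro set_eqI iffI)
  fix e
  assume e: "e \<in> {e. e < m * h \<and> e mod m = i}"
  then have "e = i + m * (e div m)" "e div m < h"
    by (auto simp: less_mult_imp_div_less mult.commute)
  then show "e \<in> (\<lambda>q. i + m * q) ` {..<h}"
    by blast
next
  fix e
  assume "e \<in> (\<lambda>q. i + m * q) ` {..<h}"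
  then obtain q where q: "q < h" "e = i + m * q"
    by blast
  have "i + m * q < m * Suc q"
    using assms by simp
  also have "\<dots> \<le> m * h"
    using q(1) by (intro mult_le_mono2) simp
  finally show "e \<in> {e. e < m * h \<and> e mod m = i}"
    using q assms by simp
qed

lemma inj_on_residue_class: "0 < (m::nat) \<Longrightarrow> inj_on (\<lambda>q. i + m * q) A"
  by (auto simp: inj_on_def)

lemma card_residue_class:
  fixes m h i :: nat
  assumes "i < m"
  shows "card {e. e < m * h \<and> e mod m = i} = h"
  unfolding residue_class_eq_image[OF assms]
  using assms by (simp add: card_image inj_on_residue_class)

lemma sum_residue_class:
  fixes m h i :: nat
  assumes "i < m"
  shows "(\<Sum>e\<in>{e. e < m * h \<and> e mod m = i}. f e) = (\<Sum>q<h. f (i + m * q))"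
  unfolding residue_class_eq_image[OF assms]
  using assms by (simp add: sum.reindex inj_on_residue_class)

lemma Suc_mod_eq_iff:
  fixes e i m :: nat
  assumes "i < m"
  shows "Suc e mod m = i \<longleftrightarrow> e mod m = (i + m - 1) mod m"
proof (cases "i = 0")
  case True
  then show ?thesis
    using assms by (auto simp: mod_Suc)
next
  case False
  then have "(i + m - 1) mod m = i - 1"
    using assms by (simp add: mod_if)
  then show ?thesis
    using False assms by (auto simp: mod_Suc)
qed

lemma sum_tagged_Un:
  assumes "finite A" "finite B"
  shows "sum f ((\<lambda>e. (t, e, False)) ` A \<union> (\<lambda>e. (t, e, True)) ` B)
    = (\<Sum>e\<in>A. f (t, e, False)) + (\<Sum>e\<in>B. f (t, e, True))"
  using assms by (subst sum.union_disjoint) (auto simp: sum.reindex inj_on_def)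

lemma card_tagged_Un:
  assumes "finite A" "finite B"
  shows "card ((\<lambda>e. (t, e, False)) ` A \<union> (\<lambda>e. (t, e, True)) ` B) = card A + card B"
  using sum_tagged_Un[OF assms, where f = "\<lambda>_. 1" and t = t] by (simp only: card_eq_sum)

text \<open>
  An element \<open>(t, e, b)\<close> with \<open>e < mh\<close> belongs to array \<open>t\<close>; its magnitude \<open>d\<close> is entry
  \<open>e div m\<close> of the group \<open>tm + e mod m\<close> of the half set. The copy \<open>b = False\<close> carries \<open>d\<close>
  in row \<open>e mod m\<close>, the copy \<open>b = True\<close> carries \<open>N - d\<close> in row \<open>(e + 1) mod m\<close>, and both sit
  in column \<open>evens_first (mh) e div \<kappa>\<close>.
\<close>

locale MS0_layout =
  fixes m n c h \<kappa> :: nat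
  assumes two_le_h: "2 \<le> h" and kappa_pos: "0 < \<kappa>" and two_kappa_le: "2 * \<kappa> \<le> m"
    and balanced: "m * h = n * \<kappa>"
begin

definition modulus :: nat where
  "modulus = 2 * (c * m * h) + 1"

definition elements :: "(nat \<times> nat \<times> bool) set" where
  "elements = {..<c} \<times> {..<m * h} \<times> UNIV"

definition cell :: "nat \<times> nat \<times> bool \<Rightarrow> nat \<times> nat \<times> nat" where
  "cell = (\<lambda>(t, e, b). (t, (e + (if b then 1 else 0)) mod m, evens_first (m * h) e div \<kappa>))"

definition magnitude :: "nat \<times> nat \<times> bool \<Rightarrow> nat" where
  "magnitude = (\<lambda>(t, e, b). row_entry (c * m) h (t * m + e mod m) (e div m))"

definition entry :: "nat \<times> nat \<times> bool \<Rightarrow> int" where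
  "entry x = (if snd (snd x) then int modulus - int (magnitude x) else int (magnitude x))"

lemma m_pos: "0 < m"
  using kappa_pos two_kappa_le by linarith

lemma group_index_less:
  assumes "t < c" "r < m"
  shows "t * m + r < c * m"
proof -
  have "t * m + r < Suc t * m"
    using assms(2) by simp
  also have "\<dots> \<le> c * m"
    using assms(1) by (intro mult_le_mono1) simp
  finally show ?thesis .
qed

lemma residue_mod_less: "e mod m < m"
  using m_pos by simp

lemma quotient_less: "e < m * h \<Longrightarrow> e div m < h"
  by (simp add: less_mult_imp_div_less mult.commute)

lemma inj_on_cell: "inj_on cell elements"
proof (rule inj_onI)
  fix x y
  assume "x \<in> elements" "y \<in> elements" and eq: "cell x = cell y"
  then obtain t e b t' e' b' where x: "x = (t, e, b)" "e < m * h" and y: "y = (t', e', b')" "e' < m * h"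
    unfolding elements_def by auto
  have "e = e' \<and> (if b then 1 else 0) = (if b' then 1 else (0::nat))"
    using eq x y m_pos
    by (intro evens_first_layout_inj[OF _ kappa_pos two_kappa_le, of "m * h"]) (simp_all add: cell_def)
  then show "x = y"
    using eq x y by (simp add: cell_def split: if_splits)
qed

lemma cell_less:
  assumes "x \<in> elements"
  shows "fst (cell x) < c \<and> fst (snd (cell x)) < m \<and> snd (snd (cell x)) < n"
proof -
  obtain t e b where x: "x = (t, e, b)" "t < c" "e < m * h"
    using assms unfolding elements_def by auto
  have "evens_first (m * h) e < n * \<kappa>"
    using evens_first_less[OF x(3)] balanced by simp
  then have "evens_first (m * h) e div \<kappa> < n"
    by (simp add: less_mult_imp_div_less)
  then show ?thesis
    using x m_pos by (simp add: cell_def)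
qed

lemma magnitude_bounds:
  assumes "x \<in> elements"
  shows "1 \<le> magnitude x \<and> magnitude x + 1 \<le> modulus"
proof -
  obtain t e b where x: "x = (t, e, b)" "t < c" "e < m * h"
    using assms unfolding elements_def by auto
  show ?thesis
    using row_entry_bounds[OF group_index_less[OF x(2) residue_mod_less] quotient_less[OF x(3)] two_le_h]
    unfolding x(1) magnitude_def modulus_def by (simp add: ac_simps)
qed

lemma magnitude_inj:
  assumes "(t, e, b) \<in> elements" "(t', e', b') \<in> elements"
    and "magnitude (t, e, b) = magnitude (t', e', b')"
  shows "t = t' \<and> e = e'"
proof -
  have tc: "t < c" "e < m * h" "t' < c" "e' < m * h"
    using assms(1,2) unfolding elements_def by simp_all
  have "t * m + e mod m = t' * m + e' mod m \<and> e div m = e' div m"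
    using row_entry_inj[OF group_index_less[OF tc(1) residue_mod_less] group_index_less[OF tc(3) residue_mod_less]
        quotient_less[OF tc(2)] quotient_less[OF tc(4)] two_le_h] assms(3)
    unfolding magnitude_def by simp
  moreover have "(t * m + e mod m) div m = t" "(t' * m + e' mod m) div m = t'"
    "(t * m + e mod m) mod m = e mod m" "(t' * m + e' mod m) mod m = e' mod m"
    using m_pos by simp_all
  ultimately have "t = t'" "e mod m = e' mod m" "e div m = e' div m"
    by metis+
  then show ?thesis
    by (metis div_mult_mod_eq)
qed

lemma magnitude_add_ne:
  assumes "x \<in> elements" "y \<in> elements"
  shows "magnitude x + magnitude y \<noteq> modulus"
proof -
  obtain t e b t' e' b' where x: "x = (t, e, b)" "t < c" "e < m * h"
    and y: "y = (t', e', b')" "t' < c" "e' < m * h"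
    using assms unfolding elements_def by auto
  show ?thesis
    using row_entry_add_ne[OF group_index_less[OF x(2) residue_mod_less] group_index_less[OF y(2) residue_mod_less]
        quotient_less[OF x(3)] quotient_less[OF y(3)] two_le_h]
    unfolding x(1) y(1) magnitude_def modulus_def by (simp add: ac_simps)
qed

lemma bij_betw_entry: "bij_betw entry elements (ZN_star modulus)"
proof -
  have inj: "inj_on entry elements"
  proof (rule inj_onI)
    fix x y
    assume x: "x \<in> elements" and y: "y \<in> elements" and eq: "entry x = entry y"
    obtain t e b t' e' b' where xy: "x = (t, e, b)" "y = (t', e', b')"
      by (metis prod_cases3)
    show "x = y"
    proof (cases "b = b'")
      case True
      then have "magnitude x = magnitude y"
        using eq xy by (simp add: entry_def split: if_splits)
      then show ?thesis
        using magnitude_inj x y True xy by blast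
    next
      case False
      then have "magnitude x + magnitude y = modulus"
        using eq xy by (auto simp: entry_def split: if_splits)
      then show ?thesis
        using magnitude_add_ne[OF x y] by contradiction
    qed
  qed
  moreover have "entry ` elements \<subseteq> ZN_star modulus"
    using magnitude_bounds by (force simp: entry_def ZN_star_def)
  moreover have "card (ZN_star modulus) = modulus - 1"
    by (simp add: ZN_star_def)
  then have "card elements = card (ZN_star modulus)"
    by (simp add: elements_def card_cartesian_product modulus_def)
  ultimately have "entry ` elements = ZN_star modulus"
    using card_image[OF inj] by (intro card_subset_eq) (simp_all add: ZN_star_def)
  with inj show ?thesis
    by (simp add: bij_betw_def)
qed

lemma row_elements:
  assumes "t < c" "i < m"
  shows "placed_in_row cell elements t i
    = (\<lambda>e. (t, e, False)) ` {e. e < m * h \<and> e mod m = i}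
      \<union> (\<lambda>e. (t, e, True)) ` {e. e < m * h \<and> e mod m = (i + m - 1) mod m}"
proof (intro set_eqI iffI)
  fix x
  assume "x \<in> placed_in_row cell elements t i"
  then obtain e b where x: "x = (t, e, b)" "e < m * h" "(e + (if b then 1 else 0)) mod m = i"
    by (auto simp: elements_def cell_def)
  then show "x \<in> (\<lambda>e. (t, e, False)) ` {e. e < m * h \<and> e mod m = i}
      \<union> (\<lambda>e. (t, e, True)) ` {e. e < m * h \<and> e mod m = (i + m - 1) mod m}"
    using Suc_mod_eq_iff[OF assms(2), of e] by (cases b) auto
next
  fix x
  assume "x \<in> (\<lambda>e. (t, e, False)) ` {e. e < m * h \<and> e mod m = i}
      \<union> (\<lambda>e. (t, e, True)) ` {e. e < m * h \<and> e mod m = (i + m - 1) mod m}"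
  then show "x \<in> placed_in_row cell elements t i"
    using assms Suc_mod_eq_iff[OF assms(2)] by (auto simp: elements_def cell_def)
qed

lemma entry_row_sum:
  assumes "t < c" "i < m"
  shows "(\<Sum>x\<in>placed_in_row cell elements t i. entry x) = int h * int modulus"
proof -
  define i' where "i' = (i + m - 1) mod m"
  have i': "i' < m"
    using m_pos by (simp add: i'_def)
  have magnitude_class: "magnitude (t, r + m * q, b) = row_entry (c * m) h (t * m + r) q" if "r < m" for r q b
    using that by (simp add: magnitude_def)
  have "(\<Sum>x\<in>placed_in_row cell elements t i. entry x)
      = (\<Sum>q<h. int (row_entry (c * m) h (t * m + i) q))
        + (\<Sum>q<h. int modulus - int (row_entry (c * m) h (t * m + i') q))"
    unfolding row_elements[OF assms] i'_def[symmetric]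
    by (simp add: sum_tagged_Un sum_residue_class[OF assms(2)] sum_residue_class[OF i']
        entry_def magnitude_class assms(2) i')
  also have "\<dots> = int h * int modulus"
    using row_entry_sum_eq[OF group_index_less[OF assms] group_index_less[OF assms(1) i'] two_le_h]
    by (simp add: sum_subtractf flip: of_nat_sum)
  finally show ?thesis .
qed

lemma card_row_elements:
  assumes "t < c" "i < m"
  shows "card (placed_in_row cell elements t i) = 2 * h"
  unfolding row_elements[OF assms]
  by (simp add: card_tagged_Un card_residue_class assms(2) m_pos)

lemma col_elements:
  "placed_in_col cell elements t j
    = (\<lambda>e. (t, e, False)) ` {e. e < m * h \<and> evens_first (m * h) e div \<kappa> = j}
      \<union> (\<lambda>e. (t, e, True)) ` {e. e < m * h \<and> evens_first (m * h) e div \<kappa> = j}"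
  if "t < c"
  using that by (auto simp: elements_def cell_def image_iff)

lemma card_column_block:
  assumes "j < n"
  shows "card {e. e < m * h \<and> evens_first (m * h) e div \<kappa> = j} = \<kappa>"
proof -
  have "evens_first (m * h) ` {e. e < m * h \<and> evens_first (m * h) e div \<kappa> = j}
      = {p. p < m * h \<and> p div \<kappa> = j}"
    using bij_betw_evens_first[of "m * h"] unfolding bij_betw_def by (auto simp: image_iff)
  also have "\<dots> = {j * \<kappa>..<j * \<kappa> + \<kappa>}"
  proof -
    have "j * \<kappa> + \<kappa> \<le> m * h"
      using assms balanced mult_le_mono1[of "Suc j" n \<kappa>] by simp
    then show ?thesis
      using kappa_pos dividend_less_div_times[OF kappa_pos]
      by (auto simp: add.commute mult.commute intro!: div_nat_eqI)
  qed
  finally have "card (evens_first (m * h) ` {e. e < m * h \<and> evens_first (m * h) e div \<kappa> = j}) = \<kappa>"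
    by simp
  moreover have "inj_on (evens_first (m * h)) {e. e < m * h \<and> evens_first (m * h) e div \<kappa> = j}"
    using inj_on_evens_first by (rule inj_on_subset) auto
  ultimately show ?thesis
    by (simp add: card_image)
qed

lemma entry_col_sum:
  "(\<Sum>x\<in>placed_in_col cell elements t j. entry x)
    = int (card {e. e < m * h \<and> evens_first (m * h) e div \<kappa> = j}) * int modulus"
  if "t < c"
  unfolding col_elements[OF that]
  by (simp add: sum_tagged_Un entry_def magnitude_def flip: sum.distrib)

theorem is_MS0_ZN_star_layout:
  "is_MS0_ZN_star modulus m n (2 * h) (2 * \<kappa>) c (placement_array cell entry elements)"
proof (rule is_MS0_ZN_star_placement_array[OF inj_on_cell bij_betw_entry cell_less])
  show "card (placed_in_row cell elements t i) = 2 * h" if "t < c" "i < m" for t i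
    using card_row_elements[OF that] .
  show "(\<Sum>x\<in>placed_in_row cell elements t i. entry x) mod int modulus = 0"
    if "t < c" "i < m" for t i
    by (simp add: entry_row_sum[OF that])
  show "card (placed_in_col cell elements t j) = 2 * \<kappa>" if "t < c" "j < n" for t j
    unfolding col_elements[OF that(1)] by (simp add: card_tagged_Un card_column_block[OF that(2)])
  show "(\<Sum>x\<in>placed_in_col cell elements t j. entry x) mod int modulus = 0"
    if "t < c" "j < n" for t j
    by (simp add: entry_col_sum[OF that(1)])
qed

end

lemma exists_MS0_ZN_star_even:
  fixes m n c h \<kappa> :: nat
  assumes "2 \<le> h" "0 < \<kappa>" "2 * \<kappa> \<le> m" "m * h = n * \<kappa>"
  shows "\<exists>A. is_MS0_ZN_star (n * (2 * \<kappa>) * c + 1) m n (2 * h) (2 * \<kappa>) c A"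
proof -
  interpret MS0_layout m n c h \<kappa>
    using assms by unfold_locales
  have "n * (2 * \<kappa>) * c + 1 = modulus"
    using assms(4) by (simp add: modulus_def ac_simps)
  then show ?thesis
    using is_MS0_ZN_star_layout by auto
qed

theorem mainTheorem11:
  fixes m n s k c :: nat
  assumes "0 < m" "0 < n" "0 < s" "0 < k" "0 < c"
    and "2 \<le> s" "s \<le> n" "2 \<le> k" "k \<le> m"
    and "m * s = n * k"
    and "even s" "even k" "(s, k) \<noteq> (2, 2)"
  shows "\<exists>A. is_MS0_ZN_star (n * k * c + 1) m n s k c A"
proof -
  obtain h \<kappa> where s: "s = 2 * h" and k: "k = 2 * \<kappa>"
    using assms(11,12) by (auto elim!: evenE)
  show ?thesis
  proof (cases "2 \<le> h")
    case True
    then show ?thesis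
      using exists_MS0_ZN_star_even[of h \<kappa> m n c] assms(4,9,10) s k by simp
  next
    case False
    then have "h = 1" "2 \<le> \<kappa>"
      using assms(6,8,13) s k by auto
    then obtain B where "is_MS0_ZN_star (m * (2 * 1) * c + 1) n m k s c B"
      using exists_MS0_ZN_star_even[of \<kappa> 1 n m c] assms(7,10) s k by auto
    then have "is_MS0_ZN_star (n * k * c + 1) n m k s c B"
      using assms(10) s \<open>h = 1\<close> by simp
    then show ?thesis
      by (blast intro: is_MS0_ZN_star_transpose)
  qed
qed

end
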